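(* For every $j\ge1$ there is a short exact sequence of $A(2)_*$-comodules $$0\to\Sigma^{8j}N_1(j)\otimes N_1(1)\to N_1(2j+1)\to Q^{j-1}(A/\!/A(1))_*\to0.$$
   Context: $A_*$ is the mod $2$ dual Steenrod algebra with conjugate generators $\bar\xi_k$, $|\bar\xi_k|=2^k-1$; $A(i)_*$ is its quotient Hopf algebra dual to $A(i)$, and $(A/\!/A(i))_*=A_*\square_{A(i)_*}\mathbb{F}_2$; thus $(A/\!/A(1))_*=\mathbb{F}_2[\bar\xi_1^4,\bar\xi_2^2,\bar\xi_3,\bar\xi_4,\dots]$, $(A/\!/A(2))_*=\mathbb{F}_2[\bar\xi_1^8,\bar\xi_2^4,\bar\xi_3^2,\bar\xi_4,\dots]$, and $(A(2)/\!/A(1))_*=\Lambda[\bar\xi_1^4,\bar\xi_2^2,\bar\xi_3]$. Weight: $\bar\xi_k$ has weight $2^{k-1}$, multiplicatively. $N_i(j)\subset(A/\!/A(i))_*$ is the span of monomials of weight $\le2^{i+1}j$, $M_i(j)$ the span of monomials of weight exactly $2^{i+1}j$ (these are $A_*$-, resp. $A(i)_*$-subcomodules, and $(A/\!/A(2))_*=\bigoplus_kM_2(k)$ as $A(2)_*$-comodules). Let $\tau:(A/\!/A(1))_*\to(A/\!/A(2))_*\otimes(A(2)/\!/A(1))_*$ be the $\mathbb{F}_2$-linear isomorphism $\tau(\bar\xi_1^{8i_1+4\epsilon_1}\bar\xi_2^{4i_2+2\epsilon_2}\bar\xi_3^{2i_3+\epsilon_3}\bar\xi_4^{i_4}\cdots)=\bar\xi_1^{8i_1}\bar\xi_2^{4i_2}\bar\xi_3^{2i_3}\bar\xi_4^{i_4}\cdots\otimes\bar\xi_1^{4\epsilon_1}\bar\xi_2^{2\epsilon_2}\bar\xi_3^{\epsilon_3}$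 ($i_k\ge0$, $\epsilon_k\in\{0,1\}$). Put $F^j(A/\!/A(1))_*=\tau^{-1}\big((\bigoplus_{k\ge j}M_2(k))\otimes(A(2)/\!/A(1))_*\big)$; these form a decreasing filtration of $(A/\!/A(1))_*$ by $A(2)_*$-subcomodules, and $Q^j(A/\!/A(1))_*=(A/\!/A(1))_*/F^{j+1}(A/\!/A(1))_*$. $N_1(1)=\mathbb{F}_2\{1,\bar\xi_1^4,\bar\xi_2^2,\bar\xi_3\}$. $\Sigma^n$ shifts internal degree by $n$. *)

theory Defs
  imports Main "HOL-Library.Poly_Mapping" "HOL-Library.Z2"
begin

text \<open>
  The ground field F_2 is the type bit.  A monomial in the conjugate
  generators xibar_1, xibar_2, ... is an exponent vector m :: nat =>0 nat, where
  Poly_Mapping.lookup m k is the exponent of xibar_k (k >= 1; index 0 is never used).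
  An F_2-vector space with a distinguished basis 'b is 'b =>0 bit.
  The dual Steenrod algebra A_* is mono =>0 bit (a polynomial ring).
  For a vector space V with basis 'b, the tensor product A(2)_* (x) V is represented as
  mono =>0 ('b =>0 bit), i.e. sum_a a (x) v_a with a running over the monomial basis of A(2)_*.
\<close>

type_synonym mono = "nat \<Rightarrow>\<^sub>0 nat"
type_synonym 'b vec = "'b \<Rightarrow>\<^sub>0 bit"

text \<open>the monomial xibar_i^n, with xibar_0 = 1\<close>
definition xim :: "nat \<Rightarrow> nat \<Rightarrow> mono" where
  "xim i n = (if i = 0 then 0 else Poly_Mapping.single i n)"

definition Delta_xi :: "nat \<Rightarrow> mono \<Rightarrow>\<^sub>0 mono vec" where
  "Delta_xi k = (\<Sum>i\<in>{0..k}. Poly_Mapping.single (xim i 1)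
                    (Poly_Mapping.single (xim (k - i) (2 ^ i)) 1))"

text \<open>coproduct on a monomial (Delta is multiplicative)\<close>
definition Delta_mono :: "mono \<Rightarrow> mono \<Rightarrow>\<^sub>0 mono vec" where
  "Delta_mono m = (\<Prod>k\<in>Poly_Mapping.keys m. Delta_xi k ^ Poly_Mapping.lookup m k)"

definition tscal :: "bit \<Rightarrow> (mono \<Rightarrow>\<^sub>0 'b vec) \<Rightarrow> (mono \<Rightarrow>\<^sub>0 'b vec)" where
  "tscal c X = Poly_Mapping.map (Poly_Mapping.map (\<lambda>x. c * x)) X"

definition Delta :: "mono vec \<Rightarrow> mono \<Rightarrow>\<^sub>0 mono vec" where
  "Delta p = (\<Sum>m\<in>Poly_Mapping.keys p. tscal (Poly_Mapping.lookup p m) (Delta_mono m))"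

text \<open>monomial basis of A(2)_* = A_*/(xibar_1^8, xibar_2^4, xibar_3^2, xibar_4, ...)\<close>
definition A2mon :: "mono \<Rightarrow> bool" where
  "A2mon a \<longleftrightarrow> Poly_Mapping.keys a \<subseteq> {1,2,3} \<and> Poly_Mapping.lookup a 1 < 8 \<and> Poly_Mapping.lookup a 2 < 4 \<and> Poly_Mapping.lookup a 3 < 2"

text \<open>the projection A_* (x) V -> A(2)_* (x) V (A(2)_* is a quotient by a monomial ideal)\<close>
definition truncA2 :: "(mono \<Rightarrow>\<^sub>0 'b vec) \<Rightarrow> (mono \<Rightarrow>\<^sub>0 'b vec)" where
  "truncA2 X = (\<Sum>a\<in>Poly_Mapping.keys X \<inter> {a. A2mon a}. Poly_Mapping.single a (Poly_Mapping.lookup X a))"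

text \<open>A(2)_*-coaction on (sub-comodules of) A_*\<close>
definition psi2 :: "mono vec \<Rightarrow> mono \<Rightarrow>\<^sub>0 mono vec" where
  "psi2 p = truncA2 (Delta p)"

definition tensor :: "mono vec \<Rightarrow> mono vec \<Rightarrow> (mono \<times> mono) vec" where
  "tensor p q = (\<Sum>m\<in>Poly_Mapping.keys p. \<Sum>n\<in>Poly_Mapping.keys q.
                   Poly_Mapping.single (m, n) (Poly_Mapping.lookup p m * Poly_Mapping.lookup q n))"

text \<open>diagonal coaction on a tensor product: multiply the A_*-parts\<close>
definition tcomb :: "(mono \<Rightarrow>\<^sub>0 mono vec) \<Rightarrow> (mono \<Rightarrow>\<^sub>0 mono vec)
                      \<Rightarrow> (mono \<Rightarrow>\<^sub>0 (mono \<times> mono) vec)" where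
  "tcomb X Y = (\<Sum>a\<in>Poly_Mapping.keys X. \<Sum>b\<in>Poly_Mapping.keys Y.
                   Poly_Mapping.single (a + b) (tensor (Poly_Mapping.lookup X a) (Poly_Mapping.lookup Y b)))"

definition Delta_tens :: "(mono \<times> mono) vec \<Rightarrow> mono \<Rightarrow>\<^sub>0 (mono \<times> mono) vec" where
  "Delta_tens x = (\<Sum>mn\<in>Poly_Mapping.keys x.
      tscal (Poly_Mapping.lookup x mn) (tcomb (Delta_mono (fst mn)) (Delta_mono (snd mn))))"

definition psiT :: "(mono \<times> mono) vec \<Rightarrow> mono \<Rightarrow>\<^sub>0 (mono \<times> mono) vec" where
  "psiT x = truncA2 (Delta_tens x)"

definition weight :: "mono \<Rightarrow> nat" where
  "weight m = (\<Sum>k\<in>Poly_Mapping.keys m. Poly_Mapping.lookup m k * 2 ^ (k - 1))"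

definition deg :: "mono \<Rightarrow> nat" where
  "deg m = (\<Sum>k\<in>Poly_Mapping.keys m. Poly_Mapping.lookup m k * (2 ^ k - 1))"

text \<open>monomial bases of (A//A(1))_* and (A//A(2))_*\<close>
definition AA1mon :: "mono \<Rightarrow> bool" where
  "AA1mon m \<longleftrightarrow> 0 \<notin> Poly_Mapping.keys m \<and> 4 dvd Poly_Mapping.lookup m 1 \<and> 2 dvd Poly_Mapping.lookup m 2"

definition AA2mon :: "mono \<Rightarrow> bool" where
  "AA2mon m \<longleftrightarrow> 0 \<notin> Poly_Mapping.keys m \<and> 8 dvd Poly_Mapping.lookup m 1 \<and> 4 dvd Poly_Mapping.lookup m 2 \<and> 2 dvd Poly_Mapping.lookup m 3"

definition AA1 :: "mono vec set" where
  "AA1 = {p. \<forall>m\<in>Poly_Mapping.keys p. AA1mon m}"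

text \<open>N_1(j): span of monomials of (A//A(1))_* of weight <= 4j\<close>
definition N1basis :: "nat \<Rightarrow> mono set" where
  "N1basis j = {m. AA1mon m \<and> weight m \<le> 4 * j}"

definition N1 :: "nat \<Rightarrow> mono vec set" where
  "N1 j = {p. Poly_Mapping.keys p \<subseteq> N1basis j}"

text \<open>monomial basis of M_2(k): monomials of (A//A(2))_* of weight exactly 8k\<close>
definition M2basis :: "nat \<Rightarrow> mono set" where
  "M2basis k = {m. AA2mon m \<and> weight m = 8 * k}"

text \<open>tau on monomials: m = tauL m + tauR m, tauL m in (A//A(2))_*, tauR m in (A(2)//A(1))_*\<close>
definition tauR :: "mono \<Rightarrow> mono" where
  "tauR m = xim 1 (Poly_Mapping.lookup m 1 mod 8) + xim 2 (Poly_Mapping.lookup m 2 mod 4) + xim 3 (Poly_Mapping.lookup m 3 mod 2)"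

definition tauL :: "mono \<Rightarrow> mono" where
  "tauL m = m - tauR m"

text \<open>F^j (A//A(1))_* = tau^{-1}((sum_{k>=j} M_2(k)) (x) (A(2)//A(1))_*)\<close>
definition Fil :: "nat \<Rightarrow> mono vec set" where
  "Fil j = {p. \<forall>m\<in>Poly_Mapping.keys p. AA1mon m \<and> (\<exists>k\<ge>j. tauL m \<in> M2basis k)}"

text \<open>N_1(j) (x) N_1(1), with basis pairs of monomials\<close>
definition Src :: "nat \<Rightarrow> (mono \<times> mono) vec set" where
  "Src j = {x. Poly_Mapping.keys x \<subseteq> N1basis j \<times> N1basis 1}"

definition homog :: "('b \<Rightarrow> nat) \<Rightarrow> nat \<Rightarrow> 'b vec \<Rightarrow> bool" where
  "homog dg d x \<longleftrightarrow> (\<forall>b\<in>Poly_Mapping.keys x. dg b = d)"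

end

theory Submission imports Defs begin

(*
  The map f sends a basis tensor  m (x) n  to the monomial  lift(m) * n, where lift replaces every
  xibar_k by xibar_{k+1} (doubling the weight) and multiplies by the power of xibar_1 that brings
  the weight up to exactly 8j; this raises the internal degree by 8j, giving the shift Sigma^{8j}.
  The map g is the identity on representatives: Q^{j-1} is the quotient of (A//A(1))_* by F^j, and
  N_1(2j+1) already contains a representative of every class.

  The heart of the argument is the identity  Delta(xibar_{k+1}) = lift(Delta xibar_k) + xibar_{k+1} (x) 1
  whose error term dies in A(2)_* after the relevant Frobenius powers; this makes f a comodule map.
  Finally, a combinatorial analysis of exponent vectors shows that f is injective on basis elements
  and that its image is exactly the part of N_1(2j+1) lying in F^j, from which the theorem follows.
*)

abbreviation lk :: "('a \<Rightarrow>\<^sub>0 'b::zero) \<Rightarrow> 'a \<Rightarrow> 'b" where "lk \<equiv> Poly_Mapping.lookup"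
abbreviation ks :: "('a \<Rightarrow>\<^sub>0 'b::zero) \<Rightarrow> 'a set" where "ks \<equiv> Poly_Mapping.keys"
abbreviation sg :: "'a \<Rightarrow> 'b::zero \<Rightarrow> 'a \<Rightarrow>\<^sub>0 'b" where "sg \<equiv> Poly_Mapping.single"

type_synonym coact = "mono \<Rightarrow>\<^sub>0 mono vec"

section \<open>Characteristic two\<close>

lemma vec_add_self [simp]: "(p::'a \<Rightarrow>\<^sub>0 bit) + p = 0"
  by (rule poly_mapping_eqI) (simp add: lookup_add)

lemma coact_add_self [simp]: "(p::'a \<Rightarrow>\<^sub>0 ('c \<Rightarrow>\<^sub>0 bit)) + p = 0"
  by (rule poly_mapping_eqI) (simp add: lookup_add)

lemma vec_minus [simp]: "- (p::'a \<Rightarrow>\<^sub>0 bit) = p"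
  by (rule minus_unique) simp

lemma coact_minus [simp]: "- (p::'a \<Rightarrow>\<^sub>0 ('c \<Rightarrow>\<^sub>0 bit)) = p"
  by (rule minus_unique) simp

lemma vec_diff: "(p::'a \<Rightarrow>\<^sub>0 bit) - q = p + q"
  by (simp add: diff_conv_add_uminus)

lemma frobenius_char2:
  fixes x y :: "'a::comm_ring_1"
  assumes "(1::'a) + 1 = 0"
  shows "(x + y) ^ (2 ^ r) = x ^ (2 ^ r) + y ^ (2 ^ r)"
proof (induction r)
  case (Suc r)
  have "(2::'a) = 0" using assms one_add_one[where 'a='a] by simp
  then have square: "(u + v) ^ 2 = u ^ 2 + v ^ 2" for u v :: 'a by (simp add: power2_sum)
  show ?case by (simp only: power_Suc2 power_mult Suc.IH square)
qed simp

lemma frobenius_coact: "((x::coact) + y) ^ (2 ^ r) = x ^ (2 ^ r) + y ^ (2 ^ r)"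
  by (rule frobenius_char2) (rule coact_add_self)

section \<open>Additive maps and linear extensions\<close>

definition additive :: "('a::monoid_add \<Rightarrow> 'b::monoid_add) \<Rightarrow> bool" where
  "additive F \<longleftrightarrow> (\<forall>x y. F (x + y) = F x + F y)"

lemma additive_zero: "additive F \<Longrightarrow> F 0 = (0::'b::cancel_comm_monoid_add)"
  unfolding additive_def by (metis add_0_right add_cancel_right_right)

lemma additive_sum:
  assumes "additive (F::'a::comm_monoid_add \<Rightarrow> 'b::cancel_comm_monoid_add)"
  shows "F (sum g I) = (\<Sum>i\<in>I. F (g i))"
proof (cases "finite I")
  case True
  then show ?thesis
    by (induction I rule: finite_induct) (simp_all add: additive_zero[OF assms] assms[unfolded additive_def])
qed (simp add: additive_zero[OF assms])

definition lin_ext :: "('k \<Rightarrow> 'v::monoid_add \<Rightarrow> 'w::comm_monoid_add) \<Rightarrow> ('k \<Rightarrow>\<^sub>0 'v) \<Rightarrow> 'w" where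
  "lin_ext h p = (\<Sum>k\<in>ks p. h k (lk p k))"

lemma lin_ext_add:
  assumes "\<And>k. h k 0 = 0" "\<And>k a b. h k (a + b) = h k a + h k b"
  shows "lin_ext h (p + q) = lin_ext h p + lin_ext h q"
  unfolding lin_ext_def by (rule setsum_keys_plus_distrib) (simp_all add: assms)

lemma lin_ext_additive:
  assumes "\<And>k. h k 0 = 0" "\<And>k a b. h k (a + b) = h k a + h k b"
  shows "additive (lin_ext h)"
  unfolding additive_def
proof (intro allI)
  fix x y show "lin_ext h (x + y) = lin_ext h x + lin_ext h y"
    by (rule lin_ext_add) (simp_all add: assms)
qed

lemma lin_ext_single: "h k 0 = 0 \<Longrightarrow> lin_ext h (sg k v) = h k v"
  by (cases "v = 0") (simp_all add: lin_ext_def)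

lemma lin_ext_zero [simp]: "lin_ext h 0 = 0"
  by (simp add: lin_ext_def)

lemma lin_ext_superset:
  assumes "finite F" "ks p \<subseteq> F" "\<And>k. h k 0 = 0"
  shows "lin_ext h p = (\<Sum>k\<in>F. h k (lk p k))"
  unfolding lin_ext_def
  by (rule sum.mono_neutral_left) (use assms in \<open>auto simp: in_keys_iff\<close>)

lemma poly_mapping_expand: "(p::'a \<Rightarrow>\<^sub>0 'b::comm_monoid_add) = (\<Sum>k\<in>ks p. sg k (lk p k))"
proof (rule poly_mapping_eqI)
  fix i
  have "lk (\<Sum>k\<in>ks p. sg k (lk p k)) i = (\<Sum>k\<in>ks p. if k = i then lk p k else 0)"
    unfolding lookup_sum by (rule sum.cong) (auto simp: lookup_single when_def)
  also have "\<dots> = lk p i" by (auto simp: in_keys_iff)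
  finally show "lk p i = lk (\<Sum>k\<in>ks p. sg k (lk p k)) i" by simp
qed

lemma poly_mapping_induct:
  assumes "P 0" "\<And>X Y. P X \<Longrightarrow> P Y \<Longrightarrow> P (X + Y)"
    "\<And>k. k \<in> ks (p::'a \<Rightarrow>\<^sub>0 'b::comm_monoid_add) \<Longrightarrow> P (sg k (lk p k))"
  shows "P p"
proof -
  have "P (\<Sum>k\<in>F. sg k (lk p k))" if "F \<subseteq> ks p" for F
    using finite_subset[OF that finite_keys] that
    by (induction F rule: finite_induct) (auto intro: assms)
  then show ?thesis by (metis order_refl poly_mapping_expand)
qed

lemma coact_induct:
  assumes "P 0" "\<And>X Y. P X \<Longrightarrow> P Y \<Longrightarrow> P (X + Y)"
    "\<And>a m. m \<in> ks (lk (X::coact) a) \<Longrightarrow> P (sg a (sg m (lk (lk X a) m)))"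
  shows "P X"
proof (rule poly_mapping_induct[of P X])
  fix a assume "a \<in> ks X"
  show "P (sg a (lk X a))"
  proof (rule poly_mapping_induct[of "\<lambda>v. P (sg a v)" "lk X a"])
    show "P (sg a (x + y))" if "P (sg a x)" "P (sg a y)" for x y
      using assms(2)[OF that] by (simp add: single_add)
  qed (use assms in auto)
qed (use assms in auto)

lemma lookup_map: "lk (Poly_Mapping.map g p) k = (if lk p k = 0 then 0 else g (lk p k))"
  by (simp add: Poly_Mapping.map.rep_eq when_def)

lemma lookup_map0: "g 0 = 0 \<Longrightarrow> lk (Poly_Mapping.map g p) k = g (lk p k)"
  by (simp add: lookup_map)

lemma map_add:
  fixes g :: "'b::cancel_comm_monoid_add \<Rightarrow> 'c::cancel_comm_monoid_add"
  assumes "additive g"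
  shows "Poly_Mapping.map g (X + Y) = Poly_Mapping.map g X + Poly_Mapping.map g (Y :: 'a \<Rightarrow>\<^sub>0 'b)"
  by (rule poly_mapping_eqI)
    (simp add: lookup_map0 additive_zero[OF assms] lookup_add assms[unfolded additive_def])

lemma map_additive:
  "additive g \<Longrightarrow>
   additive (Poly_Mapping.map (g :: 'b::cancel_comm_monoid_add \<Rightarrow> 'c::cancel_comm_monoid_add) :: ('a \<Rightarrow>\<^sub>0 'b) \<Rightarrow> _)"
  by (simp add: additive_def map_add)

lemma map_expand: "g 0 = 0 \<Longrightarrow> Poly_Mapping.map g p = (\<Sum>a\<in>ks p. sg a (g (lk p a)))"
proof (rule poly_mapping_eqI)
  fix i assume g: "g 0 = 0"
  have "lk (\<Sum>a\<in>ks p. sg a (g (lk p a))) i = (\<Sum>a\<in>ks p. if a = i then g (lk p a) else 0)"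
    unfolding lookup_sum by (rule sum.cong) (auto simp: lookup_single when_def)
  also have "\<dots> = g (lk p i)" using g by (auto simp: in_keys_iff)
  finally show "lk (Poly_Mapping.map g p) i = lk (\<Sum>a\<in>ks p. sg a (g (lk p a))) i"
    by (simp add: lookup_map0 g)
qed

section \<open>Exponent vectors: generators, weight and degree\<close>

lemma xim_add: "xim k (a + b) = xim k a + xim k b"
  by (simp add: xim_def single_add)

lemma xim_0 [simp]: "xim k 0 = 0" "xim 0 e = 0"
  by (simp_all add: xim_def)

lemma lookup_xim: "lk (xim k e) i = (if k \<noteq> 0 \<and> i = k then e else 0)"
  by (simp add: xim_def lookup_single)

lemma pow_single_xim: "(sg (xim k e) (c::'b::comm_semiring_1)) ^ n = sg (xim k (n * e)) (c ^ n)"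
  by (induction n) (simp_all add: mult_single xim_add)

lemma pow_single_single_xim: "(sg 0 (sg (xim k e) (1::bit)) :: coact) ^ n = sg 0 (sg (xim k (n * e)) 1)"
  by (induction n) (simp_all add: mult_single xim_add)

definition lin_form :: "(nat \<Rightarrow> nat) \<Rightarrow> mono \<Rightarrow> nat" where
  "lin_form c = lin_ext (\<lambda>k v. v * c k)"

lemma weight_lin_form: "weight = lin_form (\<lambda>k. 2 ^ (k - 1))"
  by (simp add: fun_eq_iff weight_def lin_form_def lin_ext_def)

lemma deg_lin_form: "deg = lin_form (\<lambda>k. 2 ^ k - 1)"
  by (simp add: fun_eq_iff deg_def lin_form_def lin_ext_def)

lemma lin_form_add: "lin_form c (m + n) = lin_form c m + lin_form c n"
  unfolding lin_form_def by (rule lin_ext_add) (simp_all add: algebra_simps)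

lemma lin_form_additive: "additive (lin_form c)"
  by (simp add: additive_def lin_form_add)

lemma lin_form_zero [simp]: "lin_form c 0 = 0"
  by (simp add: lin_form_def)

lemma lin_form_single: "lin_form c (sg k e) = e * c k"
  unfolding lin_form_def by (rule lin_ext_single) simp

lemma lin_form_xim: "lin_form c (xim k e) = (if k = 0 then 0 else e * c k)"
  by (simp add: xim_def lin_form_single)

lemma lin_form_superset: "finite F \<Longrightarrow> ks m \<subseteq> F \<Longrightarrow> lin_form c m = (\<Sum>k\<in>F. lk m k * c k)"
  unfolding lin_form_def by (rule lin_ext_superset) auto

lemma lin_form_term_le: "lk m k * c k \<le> lin_form c m"
proof (cases "k \<in> ks m")
  case True
  have "lin_form c m = (\<Sum>k\<in>ks m. lk m k * c k)" by (rule lin_form_superset) auto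
  then show ?thesis using True by (simp only:) (intro member_le_sum, auto)
qed (simp add: in_keys_iff)

lemma weight_add: "weight (m + n) = weight m + weight n"
  by (simp add: weight_lin_form lin_form_add)

lemma deg_add: "deg (m + n) = deg m + deg n"
  by (simp add: deg_lin_form lin_form_add)

lemma weight_xim: "weight (xim k e) = (if k = 0 then 0 else e * 2 ^ (k - 1))"
  by (simp add: weight_lin_form lin_form_xim)

lemma deg_xim: "deg (xim k e) = (if k = 0 then 0 else e * (2 ^ k - 1))"
  by (simp add: deg_lin_form lin_form_xim)

lemma weight_zero [simp]: "weight 0 = 0"
  by (simp add: weight_lin_form lin_form_def)

lemma weight_term_le: "lk m k * 2 ^ (k - 1) \<le> weight m"
  unfolding weight_lin_form by (rule lin_form_term_le)

text \<open>Divisibility of the exponents of xibar_1, ..., xibar_e by 2^e, ..., 2 forces 2^e to divide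
  the weight; for e = 2 and e = 3 this covers (A//A(1))_* and (A//A(2))_*.\<close>
lemma weight_dvd_pow2:
  assumes "0 \<notin> ks m" and "\<And>k. 1 \<le> k \<Longrightarrow> k \<le> e \<Longrightarrow> 2 ^ (Suc e - k) dvd lk m k"
  shows "2 ^ e dvd weight m"
proof -
  have "2 ^ e dvd lk m k * 2 ^ (k - 1)" if "k \<in> ks m" for k
  proof (cases "k \<le> e")
    case True
    have "1 \<le> k" using that assms(1) by (cases k) auto
    then have "(2::nat) ^ e = 2 ^ (Suc e - k) * 2 ^ (k - 1)"
      using True by (simp flip: power_add)
    then show ?thesis using assms(2)[OF \<open>1 \<le> k\<close> True] by (simp add: mult_dvd_mono)
  next
    case False
    then have "(2::nat) ^ e dvd 2 ^ (k - 1)" by (simp add: le_imp_power_dvd)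
    then show ?thesis by simp
  qed
  then show ?thesis by (simp add: weight_def dvd_sum)
qed

lemma AA1_lk0: "AA1mon m \<Longrightarrow> lk m 0 = 0"
  by (simp add: AA1mon_def in_keys_iff)

lemma weight_AA1_dvd:
  assumes "AA1mon m"
  shows "4 dvd weight m"
proof -
  have "2 ^ 2 dvd weight m"
  proof (rule weight_dvd_pow2)
    show "0 \<notin> ks m" using assms by (simp add: AA1mon_def)
    fix k :: nat assume "1 \<le> k" "k \<le> 2"
    then have "k = 1 \<or> k = 2" by auto
    then show "2 ^ (Suc 2 - k) dvd lk m k" using assms by (auto simp: AA1mon_def)
  qed
  then show ?thesis by simp
qed

lemma weight_AA2_dvd:
  assumes "AA2mon m"
  shows "8 dvd weight m"
proof -
  have "2 ^ 3 dvd weight m"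
  proof (rule weight_dvd_pow2)
    show "0 \<notin> ks m" using assms by (simp add: AA2mon_def)
    fix k :: nat assume "1 \<le> k" "k \<le> 3"
    then have "k = 1 \<or> k = 2 \<or> k = 3" by auto
    then show "2 ^ (Suc 3 - k) dvd lk m k" using assms by (auto simp: AA2mon_def)
  qed
  then show ?thesis by simp
qed

section \<open>The shift xibar_k \<mapsto> xibar_(k+1) and its inverse\<close>

definition shift :: "mono \<Rightarrow> mono" where
  "shift = lin_ext (\<lambda>k v. if k = 0 then 0 else sg (Suc k) v)"

lemma shift_add: "shift (m + n) = shift m + shift n"
  unfolding shift_def by (rule lin_ext_add) (simp_all add: single_add)

lemma shift_xim: "shift (xim k e) = (if k = 0 then 0 else xim (Suc k) e)"
  unfolding xim_def shift_def by (simp add: lin_ext_single)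

lemma lookup_shift: "lk (shift m) i = (if 2 \<le> i then lk m (i - 1) else 0)"
proof -
  have "lk (shift m) i = (\<Sum>k\<in>ks m. if k = i - 1 \<and> 2 \<le> i then lk m k else 0)"
    unfolding shift_def lin_ext_def lookup_sum
    by (rule sum.cong) (auto simp: lookup_single when_def)
  also have "\<dots> = (if 2 \<le> i then lk m (i - 1) else 0)"
    by (cases "2 \<le> i") (auto simp: in_keys_iff)
  finally show ?thesis .
qed

lemma lin_form_shift:
  assumes "lk m 0 = 0"
  shows "lin_form c (shift m) = lin_form (\<lambda>k. c (Suc k)) m"
proof -
  have "lin_form c (shift m) = (\<Sum>k\<in>ks m. lin_form c (if k = 0 then 0 else sg (Suc k) (lk m k)))"
    unfolding shift_def lin_ext_def by (rule additive_sum[OF lin_form_additive])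
  also have "\<dots> = (\<Sum>k\<in>ks m. lk m k * c (Suc k))"
    by (rule sum.cong) (use assms in \<open>auto simp: lin_form_single in_keys_iff\<close>)
  also have "\<dots> = lin_form (\<lambda>k. c (Suc k)) m" by (simp add: lin_form_def lin_ext_def)
  finally show ?thesis .
qed

lemma weight_shift:
  assumes "lk m 0 = 0"
  shows "weight (shift m) = 2 * weight m"
proof -
  have "weight (shift m) = lin_form (\<lambda>k. 2 ^ (Suc k - 1)) m"
    unfolding weight_lin_form by (rule lin_form_shift[OF assms])
  also have "\<dots> = (\<Sum>k\<in>ks m. 2 * (lk m k * 2 ^ (k - 1)))"
    unfolding lin_form_superset[OF finite_keys order_refl]
  proof (rule sum.cong)
    fix k assume "k \<in> ks m"
    then have "k \<noteq> 0" using assms by (cases k) (auto simp: in_keys_iff)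
    then show "lk m k * 2 ^ (Suc k - 1) = 2 * (lk m k * 2 ^ (k - 1))" by (cases k) auto
  qed simp
  also have "\<dots> = 2 * weight m" by (simp add: weight_def sum_distrib_left)
  finally show ?thesis .
qed

lemma deg_shift:
  assumes "lk m 0 = 0"
  shows "deg (shift m) = deg m + 2 * weight m"
proof -
  have "deg (shift m) = lin_form (\<lambda>k. 2 ^ Suc k - 1) m"
    unfolding deg_lin_form by (rule lin_form_shift[OF assms])
  also have "\<dots> = (\<Sum>k\<in>ks m. lk m k * (2 ^ k - 1) + 2 * (lk m k * 2 ^ (k - 1)))"
    unfolding lin_form_superset[OF finite_keys order_refl]
  proof (rule sum.cong)
    fix k assume "k \<in> ks m"
    then obtain k' where k': "k = Suc k'" using assms by (cases k) (auto simp: in_keys_iff)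
    have "(1::nat) \<le> 2 ^ k'" by simp
    then have "(2::nat) ^ Suc (Suc k') - 1 = (2 ^ Suc k' - 1) + 2 * 2 ^ k'" by simp
    then show "lk m k * (2 ^ Suc k - 1) = lk m k * (2 ^ k - 1) + 2 * (lk m k * 2 ^ (k - 1))"
      using k' by (simp add: algebra_simps)
  qed simp
  also have "\<dots> = deg m + 2 * weight m"
    by (simp add: deg_def weight_def sum.distrib sum_distrib_left)
  finally show ?thesis .
qed

definition unshift :: "mono \<Rightarrow> mono" where
  "unshift = lin_ext (\<lambda>k v. if k \<le> 1 then 0 else sg (k - 1) v)"

lemma lookup_unshift: "lk (unshift t) i = (if 1 \<le> i then lk t (Suc i) else 0)"
proof -
  have "lk (unshift t) i = (\<Sum>k\<in>ks t. if k = Suc i \<and> 1 \<le> i then lk t k else 0)"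
    unfolding unshift_def lin_ext_def lookup_sum
    by (rule sum.cong) (auto simp: lookup_single when_def)
  also have "\<dots> = (if 1 \<le> i then lk t (Suc i) else 0)"
    by (cases "1 \<le> i") (auto simp: in_keys_iff)
  finally show ?thesis .
qed

lemma shift_unshift:
  assumes "lk t 0 = 0"
  shows "t = xim 1 (lk t 1) + shift (unshift t)"
proof (rule poly_mapping_eqI)
  fix i :: nat
  consider "i = 0" | "i = 1" | "2 \<le> i" by linarith
  then show "lk t i = lk (xim 1 (lk t 1) + shift (unshift t)) i"
  proof cases
    case 3
    then have "1 \<le> i - 1" "Suc (i - 1) = i" by auto
    then show ?thesis using 3 by (simp add: lookup_add lookup_xim lookup_shift lookup_unshift)
  qed (use assms in \<open>simp_all add: lookup_add lookup_xim lookup_shift\<close>)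
qed

section \<open>Truncation to A(2)_*\<close>

lemma lookup_trunc: "lk (truncA2 X) a = (if A2mon a then lk X a else 0)"
proof -
  have "lk (truncA2 X) a = (\<Sum>b\<in>ks X \<inter> {a. A2mon a}. (if b = a then lk X b else 0))"
    by (simp add: truncA2_def lookup_sum lookup_single when_def)
  also have "\<dots> = (if a \<in> ks X \<inter> {a. A2mon a} then lk X a else 0)"
    by (simp add: sum.delta)
  finally show ?thesis by (auto simp: in_keys_iff)
qed

lemma trunc_add: "truncA2 (X + Y) = truncA2 X + truncA2 Y"
  by (rule poly_mapping_eqI) (simp add: lookup_trunc lookup_add)

lemma trunc_zero_iff: "truncA2 X = 0 \<longleftrightarrow> (\<forall>a\<in>ks X. \<not> A2mon a)"
  by (auto simp: poly_mapping_eq_iff lookup_trunc fun_eq_iff in_keys_iff)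

lemma trunc_map: "g 0 = 0 \<Longrightarrow> truncA2 (Poly_Mapping.map g Z) = Poly_Mapping.map g (truncA2 Z)"
  by (rule poly_mapping_eqI) (simp add: lookup_trunc lookup_map0)

text \<open>The monomials outside A(2)_* form an ideal: divisors of A(2)_*-monomials are A(2)_*-monomials.\<close>
lemma A2mon_add: "A2mon (a + b) \<Longrightarrow> A2mon a"
proof -
  assume h: "A2mon (a + b)"
  have "ks a \<subseteq> ks (a + b)" by (auto simp: in_keys_iff lookup_add)
  then show ?thesis using h unfolding A2mon_def by (auto simp: lookup_add)
qed

text \<open>Hence truncation is a ring map: products may be computed on truncated factors.\<close>
lemma trunc_mult_cong:
  assumes "truncA2 X = truncA2 X'"
  shows "truncA2 ((X::coact) * Y) = truncA2 (X' * Y)"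
proof -
  have "truncA2 (X + X') = 0" using assms by (simp add: trunc_add)
  then have diff: "\<forall>a\<in>ks (X + X'). \<not> A2mon a" by (simp add: trunc_zero_iff)
  have "\<forall>c\<in>ks ((X + X') * Y). \<not> A2mon c"
  proof
    fix c assume "c \<in> ks ((X + X') * Y)"
    then obtain a b where "a \<in> ks (X + X')" "c = a + b" using keys_mult by blast
    then show "\<not> A2mon c" using diff A2mon_add by blast
  qed
  then have "truncA2 ((X + X') * Y) = 0" by (simp add: trunc_zero_iff)
  then have "truncA2 (X * Y) + truncA2 (X' * Y) = 0" by (simp add: distrib_right trunc_add)
  then have "- truncA2 (X * Y) = truncA2 (X' * Y)" by (rule minus_unique)
  then show ?thesis by simp
qed

lemma trunc_mult_cong2:
  assumes "truncA2 X = truncA2 X'"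
  shows "truncA2 ((Y::coact) * X) = truncA2 (Y * X')"
  by (subst (1 2) mult.commute) (rule trunc_mult_cong[OF assms])

lemma trunc_pow_cong:
  assumes "truncA2 X = truncA2 X'"
  shows "truncA2 ((X::coact) ^ n) = truncA2 (X' ^ n)"
proof (induction n)
  case (Suc n)
  have "truncA2 (X ^ Suc n) = truncA2 (X' * X ^ n)" by (simp add: trunc_mult_cong[OF assms])
  also have "\<dots> = truncA2 (X' ^ Suc n)" by (simp add: trunc_mult_cong2[OF Suc.IH])
  finally show ?case .
qed simp

section \<open>The coproduct and the coactions\<close>

lemma Delta_mono_superset:
  assumes "finite F" "ks m \<subseteq> F"
  shows "Delta_mono m = (\<Prod>k\<in>F. Delta_xi k ^ lk m k)"
  unfolding Delta_mono_def
  by (rule prod.mono_neutral_left) (use assms in \<open>auto simp: in_keys_iff\<close>)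

lemma Delta_mono_add: "Delta_mono (m + n) = Delta_mono m * Delta_mono n"
proof -
  let ?F = "ks m \<union> ks n"
  have "Delta_mono (m + n) = (\<Prod>k\<in>?F. Delta_xi k ^ lk (m + n) k)"
    by (rule Delta_mono_superset) (use keys_add[of m n] in auto)
  also have "\<dots> = (\<Prod>k\<in>?F. Delta_xi k ^ lk m k * Delta_xi k ^ lk n k)"
    by (simp add: lookup_add power_add)
  also have "\<dots> = Delta_mono m * Delta_mono n"
    by (simp add: prod.distrib Delta_mono_superset[of ?F m] Delta_mono_superset[of ?F n])
  finally show ?thesis .
qed

lemma Delta_mono_zero [simp]: "Delta_mono 0 = 1"
  by (simp add: Delta_mono_def)

lemma Delta_mono_xim: "k \<noteq> 0 \<Longrightarrow> Delta_mono (xim k e) = Delta_xi k ^ e"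
  by (cases "e = 0") (simp_all add: xim_def Delta_mono_def)

lemma map_zero_pm [simp]: "Poly_Mapping.map g 0 = 0"
  by (rule poly_mapping_eqI) (simp add: lookup_map)

lemma lookup2_tscal: "lk (lk (tscal c X) a) m = c * lk (lk X a) m"
  by (simp add: tscal_def lookup_map0)

lemma tscal_one [simp]: "tscal 1 X = X"
  by (rule poly_mapping_eqI, rule poly_mapping_eqI) (simp add: lookup2_tscal)

lemma tscal_zero [simp]: "tscal 0 X = 0"
  by (rule poly_mapping_eqI, rule poly_mapping_eqI) (simp add: lookup2_tscal)

lemma tscal_add: "tscal (a + b) X = tscal a X + tscal b X"
  by (rule poly_mapping_eqI, rule poly_mapping_eqI) (simp only: lookup2_tscal lookup_add distrib_right)

lemma Delta_additive: "additive Delta"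
proof -
  have "Delta = lin_ext (\<lambda>m c. tscal c (Delta_mono m))"
    by (simp add: fun_eq_iff Delta_def lin_ext_def)
  moreover have "additive (lin_ext (\<lambda>m c. tscal c (Delta_mono m)))"
    by (rule lin_ext_additive) (simp_all only: tscal_add tscal_zero)
  ultimately show ?thesis by simp
qed

lemma psi2_additive: "additive psi2"
  using Delta_additive by (simp add: additive_def psi2_def trunc_add)

lemma Delta_tens_additive: "additive Delta_tens"
proof -
  have "Delta_tens = lin_ext (\<lambda>mn c. tscal c (tcomb (Delta_mono (fst mn)) (Delta_mono (snd mn))))"
    by (simp add: fun_eq_iff Delta_tens_def lin_ext_def)
  moreover have "additive (lin_ext (\<lambda>mn c. tscal c (tcomb (Delta_mono (fst mn)) (Delta_mono (snd mn)))))"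
    by (rule lin_ext_additive) (simp_all only: tscal_add tscal_zero)
  ultimately show ?thesis by simp
qed

lemma psiT_additive: "additive psiT"
  using Delta_tens_additive by (simp add: additive_def psiT_def trunc_add)

section \<open>Lifting a monomial of weight at most W to a monomial of weight 2W\<close>

definition lift :: "nat \<Rightarrow> mono \<Rightarrow> mono" where
  "lift W m = shift m + xim 1 (2 * (W - weight m))"

definition lift_vec :: "nat \<Rightarrow> mono vec \<Rightarrow> mono vec" where
  "lift_vec W = lin_ext (\<lambda>m v. sg (lift W m) v)"

definition lift_coeffs :: "nat \<Rightarrow> coact \<Rightarrow> coact" where
  "lift_coeffs W = Poly_Mapping.map (lift_vec W)"

definition wt_bounded :: "nat \<Rightarrow> coact \<Rightarrow> bool" where
  "wt_bounded W X \<longleftrightarrow> (\<forall>a. \<forall>m\<in>ks (lk X a). weight m \<le> W)"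

lemma lift_vec_additive: "additive (lift_vec W)"
  unfolding lift_vec_def by (rule lin_ext_additive) (simp_all only: single_add single_zero)

lemma lift_vec_single: "lift_vec W (sg m c) = sg (lift W m) c"
  unfolding lift_vec_def by (rule lin_ext_single) simp

lemma lift_coeffs_additive: "additive (lift_coeffs W)"
  unfolding lift_coeffs_def by (rule map_additive[OF lift_vec_additive])

lemma lift_coeffs_add: "lift_coeffs W (X + Y) = lift_coeffs W X + lift_coeffs W Y"
  using lift_coeffs_additive unfolding additive_def by blast

lemma lift_coeffs_single: "lift_coeffs W (sg a (sg m c)) = sg a (sg (lift W m) c)"
  unfolding lift_coeffs_def by (simp add: lift_vec_single additive_zero[OF lift_vec_additive])

lemma lift_coeffs_one: "lift_coeffs W 1 = sg 0 (sg (xim 1 (2 * W)) 1)"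
proof -
  have "(1::coact) = sg 0 (sg 0 1)" by simp
  then have "lift_coeffs W 1 = sg 0 (sg (lift W 0) 1)" by (metis lift_coeffs_single)
  then show ?thesis by (simp add: lift_def shift_def)
qed

lemma lift_add:
  "weight m \<le> W1 \<Longrightarrow> weight n \<le> W2 \<Longrightarrow> lift (W1 + W2) (m + n) = lift W1 m + lift W2 n"
  unfolding lift_def by (simp add: shift_add weight_add xim_add[symmetric] algebra_simps)

lemma wt_bounded_add: "wt_bounded W X \<Longrightarrow> wt_bounded W Y \<Longrightarrow> wt_bounded W (X + Y)"
  unfolding wt_bounded_def using keys_add by (fastforce simp: lookup_add)

lemma wt_bounded_zero [simp]: "wt_bounded W 0"
  by (simp add: wt_bounded_def)

lemma wt_bounded_sum: "(\<And>i. i \<in> I \<Longrightarrow> wt_bounded W (g i)) \<Longrightarrow> wt_bounded W (sum g I)"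
proof (induction I rule: infinite_finite_induct)
  case (insert x F) then show ?case by (simp add: wt_bounded_add)
qed simp_all

lemma wt_bounded_atom: "wt_bounded W X \<Longrightarrow> m \<in> ks (lk X a) \<Longrightarrow> weight m \<le> W"
  unfolding wt_bounded_def by blast

lemma wt_bounded_single: "weight m \<le> W \<Longrightarrow> wt_bounded W (sg a (sg m c))"
  unfolding wt_bounded_def by (auto simp: lookup_single when_def split: if_splits)

lemma wt_bounded_one: "wt_bounded W 1"
proof -
  have "(1::coact) = sg 0 (sg 0 1)" by simp
  then show ?thesis by (metis wt_bounded_single weight_zero zero_le)
qed

lemma mult_atoms: "sg a (sg m c) * sg b (sg n d) = (sg (a + b) (sg (m + n) (c * d)) :: coact)"
  by (simp add: mult_single)

lemma wt_bounded_mult: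
  assumes "wt_bounded W1 X" "wt_bounded W2 Y"
  shows "wt_bounded (W1 + W2) (X * Y)"
proof (induction X rule: coact_induct)
  case (3 a m)
  have wm: "weight m \<le> W1" using wt_bounded_atom[OF assms(1) 3] .
  show ?case
  proof (induction Y rule: coact_induct)
    case (3 b n)
    have "weight n \<le> W2" using wt_bounded_atom[OF assms(2) 3] .
    then show ?case using wm by (simp add: mult_atoms wt_bounded_single weight_add)
  qed (simp_all add: distrib_left wt_bounded_add)
qed (simp_all add: distrib_right wt_bounded_add)

lemma lift_coeffs_mult:
  assumes "wt_bounded W1 X" "wt_bounded W2 Y"
  shows "lift_coeffs (W1 + W2) (X * Y) = lift_coeffs W1 X * lift_coeffs W2 Y"
proof (induction X rule: coact_induct)
  case (3 a m)
  have wm: "weight m \<le> W1" using wt_bounded_atom[OF assms(1) 3] .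
  show ?case
  proof (induction Y rule: coact_induct)
    case (3 b n)
    have "weight n \<le> W2" using wt_bounded_atom[OF assms(2) 3] .
    then have "lift (W1 + W2) (m + n) = lift W1 m + lift W2 n" using wm by (simp add: lift_add)
    then show ?case by (simp only: mult_atoms lift_coeffs_single)
  qed (simp_all add: distrib_left lift_coeffs_add additive_zero[OF lift_coeffs_additive])
qed (simp_all add: distrib_right lift_coeffs_add additive_zero[OF lift_coeffs_additive])

lemma lift_coeffs_pow:
  assumes "wt_bounded W X"
  shows "wt_bounded (n * W) (X ^ n) \<and> lift_coeffs (n * W) (X ^ n) = (lift_coeffs W X) ^ n"
proof (induction n)
  case 0
  have "lift_coeffs 0 1 = 1" by (simp add: lift_coeffs_one)
  then show ?case by (simp add: wt_bounded_one)
next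
  case (Suc n)
  have e: "Suc n * W = W + n * W" by simp
  show ?case unfolding e power_Suc
    using wt_bounded_mult[OF assms, of "n * W"] lift_coeffs_mult[OF assms, of "n * W"] Suc by simp
qed

section \<open>The coproduct of the generators and its compatibility with the shift\<close>

lemma weight_Delta_xi_term: "weight (xim (k - i) (2 ^ i)) \<le> 2 ^ (k - 1)"
proof (cases "k - i = 0")
  case False
  then have "i + (k - i - 1) = k - 1" by simp
  then have "(2::nat) ^ i * 2 ^ (k - i - 1) = 2 ^ (k - 1)" by (metis power_add)
  then show ?thesis using False by (simp add: weight_xim)
qed (simp add: weight_xim)

lemma wt_bounded_Delta_xi: "wt_bounded (2 ^ (k - 1)) (Delta_xi k)"
  unfolding Delta_xi_def by (intro wt_bounded_sum wt_bounded_single weight_Delta_xi_term)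

lemma lift_Delta_xi_term:
  assumes "1 \<le> k" "i \<le> k"
  shows "lift (2 ^ (k - 1)) (xim (k - i) (2 ^ i)) = xim (Suc k - i) (2 ^ i)"
proof (cases "i = k")
  case True
  have "2 * 2 ^ (k - 1) = (2::nat) ^ k" using assms(1) by (cases k) simp_all
  then show ?thesis using True by (simp add: lift_def shift_def)
next
  case False
  then have "i + (k - i - 1) = k - 1" using assms by simp
  then have w: "(2::nat) ^ i * 2 ^ (k - i - 1) = 2 ^ (k - 1)" by (metis power_add)
  have "shift (xim (k - i) (2 ^ i)) = xim (Suc k - i) (2 ^ i)"
    using False assms by (simp add: shift_xim Suc_diff_le)
  moreover have "weight (xim (k - i) (2 ^ i)) = 2 ^ (k - 1)"
    using False assms w by (simp add: weight_xim)
  ultimately show ?thesis by (simp add: lift_def)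
qed

lemma Delta_xi_Suc:
  assumes "1 \<le> k"
  shows "Delta_xi (Suc k) = lift_coeffs (2 ^ (k - 1)) (Delta_xi k) + sg (xim (Suc k) 1) 1"
proof -
  have "lift_coeffs (2 ^ (k - 1)) (Delta_xi k)
      = (\<Sum>i\<in>{0..k}. lift_coeffs (2 ^ (k - 1)) (sg (xim i 1) (sg (xim (k - i) (2 ^ i)) 1)))"
    unfolding Delta_xi_def by (rule additive_sum[OF lift_coeffs_additive])
  also have "\<dots> = (\<Sum>i\<in>{0..k}. sg (xim i 1) (sg (xim (Suc k - i) (2 ^ i)) 1))"
    by (rule sum.cong) (simp_all only: lift_coeffs_single lift_Delta_xi_term[OF assms] atLeastAtMost_iff)
  finally have lifted: "lift_coeffs (2 ^ (k - 1)) (Delta_xi k)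
      = (\<Sum>i\<in>{0..k}. sg (xim i 1) (sg (xim (Suc k - i) (2 ^ i)) 1))" .
  have "Delta_xi (Suc k) = (\<Sum>i\<in>{0..k}. sg (xim i 1) (sg (xim (Suc k - i) (2 ^ i)) 1))
      + sg (xim (Suc k) 1) (sg (xim 0 (2 ^ Suc k)) 1)"
    unfolding Delta_xi_def by (simp add: sum.atLeast0_atMost_Suc)
  then show ?thesis using lifted by simp
qed

text \<open>After a Frobenius power 2^r the error term xibar_(k+1)^(2^r) (x) 1 may vanish in A(2)_*.\<close>
lemma trunc_Delta_xi_Suc_pow:
  assumes "1 \<le> k" "\<not> A2mon (xim (Suc k) (2 ^ r))"
  shows "truncA2 (Delta_xi (Suc k) ^ (2 ^ r))
       = truncA2 (lift_coeffs (2 ^ r * 2 ^ (k - 1)) (Delta_xi k ^ (2 ^ r)))"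
proof -
  have lifted: "lift_coeffs (2 ^ r * 2 ^ (k - 1)) (Delta_xi k ^ (2 ^ r))
      = lift_coeffs (2 ^ (k - 1)) (Delta_xi k) ^ (2 ^ r)"
    using lift_coeffs_pow[OF wt_bounded_Delta_xi] by blast
  have error: "(sg (xim (Suc k) 1) (1::mono vec) :: coact) ^ (2 ^ r) = sg (xim (Suc k) (2 ^ r)) 1"
    using pow_single_xim[of "Suc k" 1 "1::mono vec" "2 ^ r"] by simp
  have error_vanishes: "truncA2 (sg (xim (Suc k) (2 ^ r)) (1::mono vec) :: coact) = 0"
    using assms(2) by (simp add: trunc_zero_iff)
  have "Delta_xi (Suc k) ^ (2 ^ r)
      = lift_coeffs (2 ^ (k - 1)) (Delta_xi k) ^ (2 ^ r) + sg (xim (Suc k) (2 ^ r)) 1"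
    using Delta_xi_Suc[OF assms(1)] frobenius_coact error by simp
  then show ?thesis using lifted error_vanishes by (simp add: trunc_add)
qed

definition shift_compatible :: "mono \<Rightarrow> bool" where
  "shift_compatible m \<longleftrightarrow> wt_bounded (weight m) (Delta_mono m) \<and>
     truncA2 (Delta_mono (shift m)) = truncA2 (lift_coeffs (weight m) (Delta_mono m))"

lemma shift_compatible_zero: "shift_compatible 0"
proof -
  have "lift_coeffs 0 1 = 1" by (simp add: lift_coeffs_one)
  then show ?thesis by (simp add: shift_compatible_def wt_bounded_one shift_def)
qed

lemma shift_compatible_add:
  assumes "shift_compatible m" "shift_compatible n"
  shows "shift_compatible (m + n)"
proof -
  have bm: "wt_bounded (weight m) (Delta_mono m)"
    and tm: "truncA2 (Delta_mono (shift m)) = truncA2 (lift_coeffs (weight m) (Delta_mono m))"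
    and bn: "wt_bounded (weight n) (Delta_mono n)"
    and tn: "truncA2 (Delta_mono (shift n)) = truncA2 (lift_coeffs (weight n) (Delta_mono n))"
    using assms by (auto simp: shift_compatible_def)
  have "truncA2 (Delta_mono (shift (m + n))) = truncA2 (Delta_mono (shift m) * Delta_mono (shift n))"
    by (simp add: shift_add Delta_mono_add)
  also have "\<dots> = truncA2 (lift_coeffs (weight m) (Delta_mono m) * Delta_mono (shift n))"
    by (rule trunc_mult_cong[OF tm])
  also have "\<dots> = truncA2 (lift_coeffs (weight m) (Delta_mono m) * lift_coeffs (weight n) (Delta_mono n))"
    by (rule trunc_mult_cong2[OF tn])
  also have "\<dots> = truncA2 (lift_coeffs (weight (m + n)) (Delta_mono (m + n)))"
    by (simp add: weight_add Delta_mono_add lift_coeffs_mult[OF bm bn])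
  finally show ?thesis
    using wt_bounded_mult[OF bm bn] by (simp add: shift_compatible_def weight_add Delta_mono_add)
qed

lemma shift_compatible_generator:
  assumes "1 \<le> k" "\<not> A2mon (xim (Suc k) (2 ^ r))"
  shows "shift_compatible (xim k (c * 2 ^ r))"
proof (induction c)
  case 0 then show ?case by (simp add: shift_compatible_zero)
next
  case (Suc c)
  have "weight (xim k (2 ^ r)) = 2 ^ r * 2 ^ (k - 1)" using assms by (simp add: weight_xim)
  moreover have "wt_bounded (2 ^ r * 2 ^ (k - 1)) (Delta_xi k ^ (2 ^ r))"
    using lift_coeffs_pow[OF wt_bounded_Delta_xi] by blast
  ultimately have "shift_compatible (xim k (2 ^ r))"
    using trunc_Delta_xi_Suc_pow[OF assms] assms(1)
    by (simp add: shift_compatible_def Delta_mono_xim shift_xim)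
  moreover have "xim k (Suc c * 2 ^ r) = xim k (2 ^ r) + xim k (c * 2 ^ r)"
    by (simp add: xim_add[symmetric])
  ultimately show ?case using shift_compatible_add Suc.IH by simp
qed

text \<open>Every monomial of (A//A(1))_* is shift compatible: xibar_1^4, xibar_2^2 and xibar_k (k \<ge> 3)
  are, because xibar_2^4, xibar_3^2 and xibar_(k+1) vanish in A(2)_*.\<close>
lemma shift_compatible_AA1:
  assumes "AA1mon m"
  shows "shift_compatible m"
proof (rule poly_mapping_induct[of shift_compatible m])
  fix k assume k: "k \<in> ks m"
  have "k \<noteq> 0"
  proof
    assume "k = 0" with k assms show False by (simp add: AA1mon_def)
  qed
  then have mono_k: "sg k (lk m k) = xim k (lk m k)" by (simp add: xim_def)
  consider "k = 1" | "k = 2" | "3 \<le> k" using \<open>k \<noteq> 0\<close> by linarith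
  then show "shift_compatible (sg k (lk m k))"
  proof cases
    case 1
    obtain c where "lk m k = c * 2 ^ 2" using assms 1 by (auto simp: AA1mon_def elim!: dvdE)
    moreover have "\<not> A2mon (xim (Suc 1) (2 ^ 2))" by (simp add: A2mon_def lookup_xim)
    ultimately show ?thesis using mono_k 1 shift_compatible_generator[of 1 2 c] by simp
  next
    case 2
    obtain c where "lk m k = c * 2 ^ 1" using assms 2 by (auto simp: AA1mon_def elim!: dvdE)
    moreover have "\<not> A2mon (xim (Suc 2) (2 ^ 1))" by (simp add: A2mon_def lookup_xim)
    ultimately show ?thesis using mono_k 2 shift_compatible_generator[of 2 1 c] by simp
  next
    case 3
    have "\<not> A2mon (xim (Suc k) (2 ^ 0))" using 3 by (auto simp: A2mon_def xim_def)
    then show ?thesis using mono_k 3 shift_compatible_generator[of k 0 "lk m k"] by simp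
  qed
qed (simp_all add: shift_compatible_zero shift_compatible_add)

lemma Delta_xi_1_pow:
  assumes "8 dvd e"
  shows "truncA2 (Delta_xi 1 ^ e) = truncA2 (sg 0 (sg (xim 1 e) 1))"
proof -
  obtain c where c: "e = 8 * c" using assms by (auto elim!: dvdE)
  define U :: coact where "U = sg 0 (sg (xim 1 1) 1)"
  define Z :: coact where "Z = sg (xim 1 1) 1"
  have D: "Delta_xi 1 = U + Z" by (simp add: Delta_xi_def U_def Z_def)
  have "(U + Z) ^ 8 = U ^ 8 + Z ^ 8" using frobenius_coact[of U Z 3] by simp
  moreover have "truncA2 (Z ^ 8) = 0" unfolding Z_def pow_single_xim
    by (simp add: trunc_zero_iff A2mon_def lookup_xim)
  ultimately have "truncA2 ((U + Z) ^ 8) = truncA2 (U ^ 8)" by (simp add: trunc_add)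
  then have "truncA2 (((U + Z) ^ 8) ^ c) = truncA2 ((U ^ 8) ^ c)" by (rule trunc_pow_cong)
  moreover have "(U ^ 8) ^ c = sg 0 (sg (xim 1 e) 1)" unfolding U_def c
    by (simp add: power_mult[symmetric] pow_single_single_xim mult.commute)
  ultimately show ?thesis unfolding D c by (simp add: power_mult)
qed

lemma trunc_Delta_lift:
  assumes "AA1mon m" "weight m \<le> W" "4 dvd W"
  shows "truncA2 (Delta_mono (lift W m)) = truncA2 (lift_coeffs W (Delta_mono m))"
proof -
  define V where "V = W - weight m"
  have bounded: "wt_bounded (weight m) (Delta_mono m)"
    and shifted: "truncA2 (Delta_mono (shift m)) = truncA2 (lift_coeffs (weight m) (Delta_mono m))"
    using shift_compatible_AA1[OF assms(1)] by (auto simp: shift_compatible_def)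
  have "4 dvd V" unfolding V_def using weight_AA1_dvd[OF assms(1)] assms(3) by (simp add: dvd_diff_nat)
  then have d8: "8 dvd 2 * V" by auto
  have lhs: "Delta_mono (lift W m) = Delta_mono (shift m) * Delta_xi 1 ^ (2 * V)"
    by (simp add: lift_def V_def Delta_mono_add Delta_mono_xim)
  have "lift_coeffs (weight m + V) (Delta_mono m * 1) = lift_coeffs (weight m) (Delta_mono m) * lift_coeffs V 1"
    by (rule lift_coeffs_mult[OF bounded wt_bounded_one])
  then have rhs: "lift_coeffs W (Delta_mono m) = lift_coeffs (weight m) (Delta_mono m) * sg 0 (sg (xim 1 (2 * V)) 1)"
    using assms(2) by (simp add: V_def lift_coeffs_one)
  have "truncA2 (Delta_mono (shift m) * Delta_xi 1 ^ (2 * V))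
      = truncA2 (lift_coeffs (weight m) (Delta_mono m) * Delta_xi 1 ^ (2 * V))"
    by (rule trunc_mult_cong[OF shifted])
  also have "\<dots> = truncA2 (lift_coeffs (weight m) (Delta_mono m) * sg 0 (sg (xim 1 (2 * V)) 1))"
    by (rule trunc_mult_cong2[OF Delta_xi_1_pow[OF d8]])
  finally show ?thesis using lhs rhs by simp
qed

section \<open>The map f and its compatibility with the coaction\<close>

definition fmono :: "nat \<Rightarrow> mono \<times> mono \<Rightarrow> mono" where
  "fmono j p = lift (4 * j) (fst p) + snd p"

definition fmap :: "nat \<Rightarrow> (mono \<times> mono) vec \<Rightarrow> mono vec" where
  "fmap j = lin_ext (\<lambda>p v. sg (fmono j p) v)"

lemma fmap_additive: "additive (fmap j)"
  unfolding fmap_def by (rule lin_ext_additive) (simp_all only: single_add single_zero)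

lemma fmap_add: "fmap j (x + y) = fmap j x + fmap j y"
  using fmap_additive unfolding additive_def by blast

lemma fmap_zero [simp]: "fmap j 0 = 0"
  by (simp add: fmap_def)

lemma fmap_single: "fmap j (sg p c) = sg (fmono j p) c"
  unfolding fmap_def by (rule lin_ext_single) simp

lemma fmap_expand: "fmap j x = (\<Sum>p\<in>ks x. sg (fmono j p) (lk x p))"
  by (simp add: fmap_def lin_ext_def)

lemma keys_fmap: "ks (fmap j x) \<subseteq> fmono j ` ks x"
proof -
  have "ks (\<Sum>p\<in>ks x. sg (fmono j p) (lk x p)) \<subseteq> (\<Union>p\<in>ks x. ks (sg (fmono j p) (lk x p)))"
    by (rule keys_sum)
  also have "\<dots> \<subseteq> fmono j ` ks x" by auto
  finally show ?thesis unfolding fmap_expand .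
qed

lemma fmap_tensor: "fmap j (tensor u v) = lift_vec (4 * j) u * v"
proof -
  have "fmap j (tensor u v) = (\<Sum>m\<in>ks u. \<Sum>n\<in>ks v. fmap j (sg (m, n) (lk u m * lk v n)))"
    unfolding tensor_def by (simp add: additive_sum[OF fmap_additive])
  also have "\<dots> = (\<Sum>m\<in>ks u. \<Sum>n\<in>ks v. sg (lift (4 * j) m) (lk u m) * sg n (lk v n))"
    by (simp add: fmap_single fmono_def mult_single)
  also have "\<dots> = (\<Sum>m\<in>ks u. sg (lift (4 * j) m) (lk u m)) * (\<Sum>n\<in>ks v. sg n (lk v n))"
    by (simp add: sum_product)
  also have "\<dots> = lift_vec (4 * j) u * v"
    by (simp add: lift_vec_def lin_ext_def poly_mapping_expand[of v, symmetric])
  finally show ?thesis .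
qed

lemma fmap_tcomb: "Poly_Mapping.map (fmap j) (tcomb X Y) = lift_coeffs (4 * j) X * Y"
proof -
  have map_fmap: "additive (Poly_Mapping.map (fmap j) :: (mono \<Rightarrow>\<^sub>0 (mono \<times> mono) vec) \<Rightarrow> _)"
    by (rule map_additive[OF fmap_additive])
  have "Poly_Mapping.map (fmap j) (tcomb X Y) = (\<Sum>a\<in>ks X. \<Sum>b\<in>ks Y.
      Poly_Mapping.map (fmap j) (sg (a + b) (tensor (lk X a) (lk Y b))))"
    unfolding tcomb_def by (simp add: additive_sum[OF map_fmap])
  also have "\<dots> = (\<Sum>a\<in>ks X. \<Sum>b\<in>ks Y. sg a (lift_vec (4 * j) (lk X a)) * sg b (lk Y b))"
    by (simp add: fmap_tensor mult_single)
  also have "\<dots> = (\<Sum>a\<in>ks X. sg a (lift_vec (4 * j) (lk X a))) * (\<Sum>b\<in>ks Y. sg b (lk Y b))"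
    by (simp add: sum_product)
  also have "\<dots> = lift_coeffs (4 * j) X * Y"
    by (simp add: lift_coeffs_def map_expand additive_zero[OF lift_vec_additive]
        poly_mapping_expand[of Y, symmetric])
  finally show ?thesis .
qed

lemma fmap_comodule_basis:
  assumes "AA1mon m" "weight m \<le> 4 * j"
  shows "psi2 (fmap j (sg (m, n) 1)) = Poly_Mapping.map (fmap j) (psiT (sg (m, n) 1))"
proof -
  have "psi2 (fmap j (sg (m, n) 1)) = truncA2 (Delta_mono (lift (4 * j) m) * Delta_mono n)"
    by (simp add: fmap_single fmono_def psi2_def Delta_def Delta_mono_add)
  also have "\<dots> = truncA2 (lift_coeffs (4 * j) (Delta_mono m) * Delta_mono n)"
    by (rule trunc_mult_cong[OF trunc_Delta_lift[OF assms]]) simp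
  also have "\<dots> = truncA2 (Poly_Mapping.map (fmap j) (tcomb (Delta_mono m) (Delta_mono n)))"
    by (simp add: fmap_tcomb)
  also have "\<dots> = Poly_Mapping.map (fmap j) (psiT (sg (m, n) 1))"
    by (simp add: trunc_map psiT_def Delta_tens_def)
  finally show ?thesis .
qed

lemma fmap_comodule:
  assumes "x \<in> Src j"
  shows "psi2 (fmap j x) = Poly_Mapping.map (fmap j) (psiT x)"
proof (rule poly_mapping_induct[of "\<lambda>x. psi2 (fmap j x) = Poly_Mapping.map (fmap j) (psiT x)" x])
  show "psi2 (fmap j 0) = Poly_Mapping.map (fmap j) (psiT 0)"
    by (simp add: additive_zero[OF psi2_additive] additive_zero[OF psiT_additive])
next
  fix X Y
  assume "psi2 (fmap j X) = Poly_Mapping.map (fmap j) (psiT X)"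
    "psi2 (fmap j Y) = Poly_Mapping.map (fmap j) (psiT Y)"
  then show "psi2 (fmap j (X + Y)) = Poly_Mapping.map (fmap j) (psiT (X + Y))"
    using psi2_additive psiT_additive map_add[OF fmap_additive, where X = "psiT X" and Y = "psiT Y"]
    by (simp add: additive_def fmap_add)
next
  fix p assume p: "p \<in> ks x"
  obtain m n where p_mn: "p = (m, n)" by (cases p)
  have "AA1mon m" "weight m \<le> 4 * j"
    using p p_mn assms by (auto simp: Src_def N1basis_def)
  moreover have "lk x p = 1" using p by (simp add: in_keys_iff)
  ultimately show "psi2 (fmap j (sg p (lk x p))) = Poly_Mapping.map (fmap j) (psiT (sg p (lk x p)))"
    using fmap_comodule_basis p_mn by simp
qed

section \<open>Exponent vectors of the monomials involved\<close>

lemma N1basis_1_char: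
  assumes "n \<in> N1basis 1"
  shows "lk n 0 = 0 \<and> (lk n 1 = 0 \<or> lk n 1 = 4) \<and> (lk n 2 = 0 \<or> lk n 2 = 2) \<and> lk n 3 \<le> 1
    \<and> (\<forall>i\<ge>4. lk n i = 0)"
proof -
  have a: "AA1mon n" and w: "weight n \<le> 4" using assms by (auto simp: N1basis_def)
  have "lk n 1 \<le> 4" using weight_term_le[of n 1] w by simp
  moreover have "4 dvd lk n 1" using a by (simp add: AA1mon_def)
  ultimately have 1: "lk n 1 = 0 \<or> lk n 1 = 4" by (auto elim!: dvdE)
  have "lk n 2 * 2 \<le> 4" using weight_term_le[of n 2] w by simp
  moreover have "2 dvd lk n 2" using a by (simp add: AA1mon_def)
  ultimately have 2: "lk n 2 = 0 \<or> lk n 2 = 2" by (auto elim!: dvdE)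
  have 3: "lk n 3 \<le> 1" using weight_term_le[of n 3] w by simp
  have 4: "lk n i = 0" if "4 \<le> i" for i
  proof -
    have "(2::nat) ^ 3 \<le> 2 ^ (i - 1)" using that by (intro power_increasing) auto
    then have "lk n i * 8 \<le> lk n i * 2 ^ (i - 1)" by simp
    then have "lk n i * 8 \<le> 4" using weight_term_le[of n i] w by linarith
    then show ?thesis by simp
  qed
  show ?thesis using AA1_lk0[OF a] 1 2 3 4 by blast
qed

lemma lookup_fmono:
  "lk (fmono j (m, n)) i = (if 2 \<le> i then lk m (i - 1) else 0)
     + (if i = 1 then 2 * (4 * j - weight m) else 0) + lk n i"
  by (simp add: fmono_def lift_def lookup_add lookup_shift lookup_xim)

lemma fmono_weight:
  assumes "AA1mon m" "weight m \<le> 4 * j"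
  shows "weight (fmono j (m, n)) = 8 * j + weight n"
  using assms by (simp add: fmono_def lift_def weight_add weight_shift AA1_lk0 weight_xim)

lemma fmono_deg:
  assumes "AA1mon m" "weight m \<le> 4 * j"
  shows "deg (fmono j (m, n)) = deg m + deg n + 8 * j"
  using assms by (simp add: fmono_def lift_def deg_add deg_shift AA1_lk0 deg_xim)

lemma mod_add_multiple: "(c::nat) dvd a \<Longrightarrow> b < c \<Longrightarrow> (a + b) mod c = b"
  by (auto elim!: dvdE)

text \<open>The exponents of xibar_1, xibar_2, xibar_3 in f(m (x) n) recover n modulo 8, 4, 2; the
  remaining exponents recover m.\<close>
lemma fmono_lookups:
  assumes "AA1mon m" "weight m \<le> 4 * j" "n \<in> N1basis 1"
  shows "lk (fmono j (m, n)) 0 = 0"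
    and "lk (fmono j (m, n)) 1 mod 8 = lk n 1"
    and "lk (fmono j (m, n)) 2 mod 4 = lk n 2"
    and "lk (fmono j (m, n)) 3 mod 2 = lk n 3"
    and "lk (fmono j (m, n)) 1 = 2 * (4 * j - weight m) + lk n 1"
    and "lk (fmono j (m, n)) 2 = lk m 1 + lk n 2"
    and "lk (fmono j (m, n)) 3 = lk m 2 + lk n 3"
    and "\<And>i. 4 \<le> i \<Longrightarrow> lk (fmono j (m, n)) i = lk m (i - 1)"
proof -
  note n = N1basis_1_char[OF assms(3)]
  have "4 dvd weight m" by (rule weight_AA1_dvd[OF assms(1)])
  then have d8: "8 dvd 2 * (4 * j - weight m)" by (auto simp: dvd_diff_nat)
  have d4: "4 dvd lk m 1" and d2: "2 dvd lk m 2" using assms(1) by (auto simp: AA1mon_def)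
  show "lk (fmono j (m, n)) 0 = 0" using n by (simp add: lookup_fmono)
  show e1: "lk (fmono j (m, n)) 1 = 2 * (4 * j - weight m) + lk n 1" by (simp add: lookup_fmono)
  show e2: "lk (fmono j (m, n)) 2 = lk m 1 + lk n 2" by (simp add: lookup_fmono)
  show e3: "lk (fmono j (m, n)) 3 = lk m 2 + lk n 3" by (simp add: lookup_fmono)
  show "lk (fmono j (m, n)) 1 mod 8 = lk n 1" unfolding e1 using n by (intro mod_add_multiple[OF d8]) auto
  show "lk (fmono j (m, n)) 2 mod 4 = lk n 2" unfolding e2 using n by (intro mod_add_multiple[OF d4]) auto
  show "lk (fmono j (m, n)) 3 mod 2 = lk n 3" unfolding e3 using n by (intro mod_add_multiple[OF d2]) auto
  show "\<And>i. 4 \<le> i \<Longrightarrow> lk (fmono j (m, n)) i = lk m (i - 1)" using n by (simp add: lookup_fmono)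
qed

definition src_basis :: "nat \<Rightarrow> (mono \<times> mono) set" where
  "src_basis j = N1basis j \<times> N1basis 1"

lemma src_basis_D: "p \<in> src_basis j \<Longrightarrow> AA1mon (fst p) \<and> weight (fst p) \<le> 4 * j \<and> snd p \<in> N1basis 1"
  by (auto simp: src_basis_def N1basis_def)

lemma Src_src_basis: "x \<in> Src j \<longleftrightarrow> ks x \<subseteq> src_basis j"
  by (simp add: Src_def src_basis_def)

lemma fmono_inj_on: "inj_on (fmono j) (src_basis j)"
proof (rule inj_onI)
  fix p q assume p: "p \<in> src_basis j" and q: "q \<in> src_basis j" and eq: "fmono j p = fmono j q"
  obtain m n m' n' where pq: "p = (m, n)" "q = (m', n')" by (cases p, cases q)
  have a: "AA1mon m" "weight m \<le> 4 * j" "n \<in> N1basis 1" "AA1mon m'" "weight m' \<le> 4 * j" "n' \<in> N1basis 1"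
    using src_basis_D[OF p] src_basis_D[OF q] pq by auto
  note L = fmono_lookups[OF a(1-3)] and L' = fmono_lookups[OF a(4-6)]
  have e: "\<And>i. lk (fmono j (m, n)) i = lk (fmono j (m', n')) i" using eq pq by simp
  have n1: "lk n 1 = lk n' 1" using L(2) L'(2) e[of 1] by simp
  have n2: "lk n 2 = lk n' 2" using L(3) L'(3) e[of 2] by simp
  have n3: "lk n 3 = lk n' 3" using L(4) L'(4) e[of 3] by simp
  have "lk n i = lk n' i" for i
  proof -
    consider "i = 0" | "i = 1" | "i = 2" | "i = 3" | "4 \<le> i" by linarith
    then show ?thesis
      by cases (use N1basis_1_char[OF a(3)] N1basis_1_char[OF a(6)] n1 n2 n3 in auto)
  qed
  then have "n = n'" by (rule poly_mapping_eqI)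
  have "lk m i = lk m' i" for i
  proof -
    consider "i = 0" | "i = 1" | "i = 2" | "3 \<le> i" by linarith
    then show ?thesis
    proof cases
      case 1 then show ?thesis using AA1_lk0[OF a(1)] AA1_lk0[OF a(4)] by simp
    next
      case 2 then show ?thesis using L(6) L'(6) e[of 2] n2 by simp
    next
      case 3 then show ?thesis using L(7) L'(7) e[of 3] n3 by simp
    next
      case 4 then show ?thesis using L(8)[of "Suc i"] L'(8)[of "Suc i"] e[of "Suc i"] by simp
    qed
  qed
  then have "m = m'" by (rule poly_mapping_eqI)
  then show "p = q" using \<open>n = n'\<close> pq by simp
qed

lemma lookup_fmap:
  assumes "ks x \<subseteq> src_basis j" "q \<in> src_basis j"
  shows "lk (fmap j x) (fmono j q) = lk x q"
proof -
  have "lk (fmap j x) (fmono j q) = (\<Sum>p\<in>ks x. if p = q then lk x p else 0)"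
    unfolding fmap_expand lookup_sum
  proof (rule sum.cong)
    fix p assume p: "p \<in> ks x"
    have "fmono j p = fmono j q \<longleftrightarrow> p = q" using inj_onD[OF fmono_inj_on] p assms by blast
    then show "lk (sg (fmono j p) (lk x p)) (fmono j q) = (if p = q then lk x p else 0)"
      by (simp add: lookup_single when_def)
  qed simp
  also have "\<dots> = lk x q" by (auto simp: in_keys_iff)
  finally show ?thesis .
qed

lemma fmono_N1basis:
  assumes "p \<in> src_basis j"
  shows "fmono j p \<in> N1basis (2 * j + 1)"
proof -
  obtain m n where p: "p = (m, n)" by (cases p)
  have a: "AA1mon m" "weight m \<le> 4 * j" "n \<in> N1basis 1" using src_basis_D[OF assms] p by auto
  note L = fmono_lookups[OF a] and n = N1basis_1_char[OF a(3)]
  have "4 dvd weight m" by (rule weight_AA1_dvd[OF a(1)])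
  then have "8 dvd 2 * (4 * j - weight m)" by (auto simp: dvd_diff_nat)
  then have "4 dvd lk (fmono j (m, n)) 1" unfolding L(5) using n by (auto intro!: dvd_add elim!: dvdE)
  moreover have "2 dvd lk (fmono j (m, n)) 2" unfolding L(6) using a(1) n by (auto simp: AA1mon_def)
  moreover have "0 \<notin> ks (fmono j (m, n))" using L(1) by (simp add: in_keys_iff)
  moreover have "weight (fmono j (m, n)) \<le> 4 * (2 * j + 1)"
    using fmono_weight[OF a(1,2)] a(3) by (simp add: N1basis_def)
  ultimately show ?thesis using p by (simp add: N1basis_def AA1mon_def)
qed

section \<open>The splitting tau and the filtration F^j\<close>

lemma lookup_tauR:
  "lk (tauR m) i = (if i = 1 then lk m 1 mod 8 else if i = 2 then lk m 2 mod 4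
                     else if i = 3 then lk m 3 mod 2 else 0)"
  by (simp add: tauR_def lookup_add lookup_xim)

lemma lookup_tauL: "lk (tauL m) i = lk m i - lk (tauR m) i"
  by (simp add: tauL_def lookup_minus)

lemma tau_sum: "tauL m + tauR m = m"
  by (rule poly_mapping_eqI) (simp add: lookup_add lookup_tauL lookup_tauR)

lemma weight_tau: "weight m = weight (tauL m) + weight (tauR m)"
  by (metis tau_sum weight_add)

lemma AA2_tauL:
  assumes "AA1mon m"
  shows "AA2mon (tauL m)"
proof -
  have "lk (tauL m) 0 = 0" using AA1_lk0[OF assms] by (simp add: lookup_tauL)
  moreover have "8 dvd lk (tauL m) 1" by (simp add: lookup_tauL lookup_tauR minus_mod_eq_mult_div)
  moreover have "4 dvd lk (tauL m) 2" by (simp add: lookup_tauL lookup_tauR minus_mod_eq_mult_div)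
  moreover have "2 dvd lk (tauL m) 3" by (simp add: lookup_tauL lookup_tauR minus_mod_eq_mult_div)
  ultimately show ?thesis by (simp add: AA2mon_def in_keys_iff)
qed

text \<open>The (A(2)//A(1))_*-part of a monomial of (A//A(1))_* has weight at most 4 + 2*2 + 4 = 12.\<close>
lemma weight_tauR_le:
  assumes "AA1mon m"
  shows "weight (tauR m) \<le> 12"
proof -
  obtain q1 q2 where "lk m 1 = 4 * q1" "lk m 2 = 2 * q2" using assms by (auto simp: AA1mon_def elim!: dvdE)
  then have "lk m 1 mod 8 \<le> 4" "lk m 2 mod 4 \<le> 2" by presburger+
  moreover have "lk m 3 mod 2 \<le> 1" by simp
  ultimately show ?thesis by (simp add: tauR_def weight_add weight_xim)
qed

lemma filtration_level_iff:
  assumes "AA1mon \<mu>"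
  shows "(\<exists>k\<ge>j. tauL \<mu> \<in> M2basis k) \<longleftrightarrow> 8 * j \<le> weight (tauL \<mu>)"
proof
  assume "8 * j \<le> weight (tauL \<mu>)"
  moreover have "AA2mon (tauL \<mu>)" by (rule AA2_tauL[OF assms])
  moreover obtain k where "weight (tauL \<mu>) = 8 * k"
    using weight_AA2_dvd[OF AA2_tauL[OF assms]] by (auto elim!: dvdE)
  ultimately show "\<exists>k\<ge>j. tauL \<mu> \<in> M2basis k" by (auto simp: M2basis_def)
qed (auto simp: M2basis_def)

lemma Fil_iff: "p \<in> Fil j \<longleftrightarrow> (\<forall>\<mu>\<in>ks p. AA1mon \<mu> \<and> 8 * j \<le> weight (tauL \<mu>))"
  using filtration_level_iff unfolding Fil_def by blast

lemma tauR_fmono: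
  assumes "p \<in> src_basis j"
  shows "tauR (fmono j p) = snd p"
proof -
  obtain m n where p: "p = (m, n)" by (cases p)
  have a: "AA1mon m" "weight m \<le> 4 * j" "n \<in> N1basis 1" using src_basis_D[OF assms] p by auto
  note L = fmono_lookups[OF a] and n = N1basis_1_char[OF a(3)]
  have "lk (tauR (fmono j (m, n))) i = lk n i" for i
  proof -
    consider "i = 0" | "i = 1" | "i = 2" | "i = 3" | "4 \<le> i" by linarith
    then show ?thesis by cases (use L n in \<open>auto simp: lookup_tauR\<close>)
  qed
  then show ?thesis using p by (auto intro: poly_mapping_eqI)
qed

lemma fmono_Fil:
  assumes "p \<in> src_basis j"
  shows "AA1mon (fmono j p) \<and> 8 * j \<le> weight (tauL (fmono j p))"
proof -
  obtain m n where p: "p = (m, n)" by (cases p)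
  have a: "AA1mon m" "weight m \<le> 4 * j" using src_basis_D[OF assms] p by auto
  have "AA1mon (fmono j p)" using fmono_N1basis[OF assms] by (simp add: N1basis_def)
  moreover have "weight (fmono j p) = weight (tauL (fmono j p)) + weight n"
    using weight_tau[of "fmono j p"] tauR_fmono[OF assms] p by simp
  ultimately show ?thesis using fmono_weight[OF a] p by simp
qed

text \<open>Conversely, a monomial of N_1(2j+1) in F^j is f of  unshift(tauL mu) (x) tauR mu.\<close>
definition fpre :: "mono \<Rightarrow> mono \<times> mono" where
  "fpre \<mu> = (unshift (tauL \<mu>), tauR \<mu>)"

lemma fpre_props:
  assumes "AA1mon \<mu>" "weight \<mu> \<le> 8 * j + 4" "8 * j \<le> weight (tauL \<mu>)"
  shows "fpre \<mu> \<in> src_basis j \<and> fmono j (fpre \<mu>) = \<mu>"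
proof -
  define t where "t = tauL \<mu>"
  have t2: "AA2mon t" unfolding t_def by (rule AA2_tauL[OF assms(1)])
  have wt: "weight t = 8 * j"
  proof -
    obtain c where c: "weight t = 8 * c" using weight_AA2_dvd[OF t2] by (auto elim!: dvdE)
    have "weight t \<le> weight \<mu>" using weight_tau[of \<mu>] t_def by simp
    then show ?thesis using c assms(2,3) t_def by simp
  qed
  have t0: "lk t 0 = 0" using t2 by (simp add: AA2mon_def in_keys_iff)
  have t_split: "t = xim 1 (lk t 1) + shift (unshift t)" by (rule shift_unshift[OF t0])
  have u0: "lk (unshift t) 0 = 0" by (simp add: lookup_unshift)
  have wtu: "weight t = lk t 1 + 2 * weight (unshift t)"
    using arg_cong[OF t_split, of weight] by (simp add: weight_add weight_xim weight_shift[OF u0])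
  have "lk (unshift t) 1 = lk t 2" "lk (unshift t) 2 = lk t 3"
    by (simp_all add: lookup_unshift numeral_2_eq_2 numeral_3_eq_3)
  then have u: "AA1mon (unshift t)" using t2 u0 by (simp add: AA1mon_def AA2mon_def in_keys_iff)
  have wu: "weight (unshift t) \<le> 4 * j" using wtu wt by simp
  have r0: "lk (tauR \<mu>) 0 = 0" by (simp add: lookup_tauR)
  have "4 dvd lk \<mu> 1 mod 8" "2 dvd lk \<mu> 2 mod 4" using assms(1) by (simp_all add: AA1mon_def dvd_mod)
  then have r: "AA1mon (tauR \<mu>)" using r0 by (simp add: AA1mon_def lookup_tauR in_keys_iff)
  have wr: "weight (tauR \<mu>) \<le> 4" using weight_tau[of \<mu>] t_def wt assms(2) by simp
  have "2 * (4 * j - weight (unshift t)) = lk t 1" using wtu wt by simp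
  then have "lift (4 * j) (unshift t) = t" unfolding lift_def using t_split by (simp add: add.commute)
  then have "fmono j (fpre \<mu>) = \<mu>" by (simp add: fmono_def fpre_def t_def tau_sum)
  moreover have "fpre \<mu> \<in> src_basis j" using u wu r wr by (simp add: fpre_def src_basis_def N1basis_def t_def)
  ultimately show ?thesis by simp
qed

section \<open>The short exact sequence\<close>

lemma fmap_N1:
  assumes "x \<in> Src j"
  shows "fmap j x \<in> N1 (2 * j + 1)"
proof -
  have "fmono j ` ks x \<subseteq> N1basis (2 * j + 1)"
    using assms fmono_N1basis by (auto simp: Src_src_basis)
  then show ?thesis using keys_fmap[of j x] by (auto simp: N1_def)
qed

lemma fmap_inj_on: "inj_on (fmap j) (Src j)"
proof (rule inj_onI)
  fix x y assume x: "x \<in> Src j" and y: "y \<in> Src j" and eq: "fmap j x = fmap j y"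
  have kx: "ks x \<subseteq> src_basis j" and ky: "ks y \<subseteq> src_basis j" using x y by (simp_all add: Src_src_basis)
  show "x = y"
  proof (rule poly_mapping_eqI)
    fix q show "lk x q = lk y q"
    proof (cases "q \<in> src_basis j")
      case True
      then show ?thesis using lookup_fmap[OF kx True] lookup_fmap[OF ky True] eq by simp
    next
      case False
      then have "q \<notin> ks x" "q \<notin> ks y" using kx ky by auto
      then show ?thesis by (simp add: in_keys_iff)
    qed
  qed
qed

lemma fmap_homog:
  assumes "x \<in> Src j" "homog (\<lambda>mn. deg (fst mn) + deg (snd mn) + 8 * j) d x"
  shows "homog deg d (fmap j x)"
  unfolding homog_def
proof
  fix \<mu> assume "\<mu> \<in> ks (fmap j x)"
  then obtain p where "p \<in> ks x" "\<mu> = fmono j p" using keys_fmap by blast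
  moreover obtain m n where "p = (m, n)" by (cases p)
  ultimately have p: "(m, n) \<in> ks x" "\<mu> = fmono j (m, n)" by simp_all
  then have "AA1mon m" "weight m \<le> 4 * j" using assms(1) src_basis_D by (auto simp: Src_src_basis)
  moreover have "deg m + deg n + 8 * j = d" using assms(2) p by (auto simp: homog_def)
  ultimately show "deg \<mu> = d" using fmono_deg p by simp
qed

text \<open>Every class of Q^(j-1) has a representative in N_1(2j+1): keep the monomials of
  filtration below j, whose weight is at most 8(j-1) + 12.\<close>
lemma N1_representative:
  assumes "y \<in> AA1"
  shows "\<exists>x\<in>N1 (2 * j + 1). x - y \<in> Fil j"
proof -
  define S where "S = {\<mu> \<in> ks y. weight (tauL \<mu>) < 8 * j}"
  define x where "x = (\<Sum>\<mu>\<in>S. sg \<mu> (lk y \<mu>))"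
  have lx: "lk x \<mu> = (if \<mu> \<in> S then lk y \<mu> else 0)" for \<mu>
    unfolding x_def lookup_sum by (simp add: lookup_single when_def S_def)
  have "\<mu> \<in> N1basis (2 * j + 1)" if "\<mu> \<in> S" for \<mu>
  proof -
    have a: "AA1mon \<mu>" and low: "weight (tauL \<mu>) < 8 * j" using that assms by (auto simp: S_def AA1_def)
    obtain c where "weight (tauL \<mu>) = 8 * c" using weight_AA2_dvd[OF AA2_tauL[OF a]] by (auto elim!: dvdE)
    then have "weight (tauL \<mu>) + 8 \<le> 8 * j" using low by simp
    then have "weight \<mu> \<le> 4 * (2 * j + 1)" using weight_tau[of \<mu>] weight_tauR_le[OF a] by simp
    then show ?thesis using a by (simp add: N1basis_def)
  qed
  then have "x \<in> N1 (2 * j + 1)" using lx by (auto simp: N1_def in_keys_iff split: if_splits)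
  moreover have "x - y \<in> Fil j" unfolding Fil_iff
  proof
    fix \<mu> assume "\<mu> \<in> ks (x - y)"
    then have "\<mu> \<in> ks y" "\<mu> \<notin> S" using lx by (auto simp: in_keys_iff vec_diff lookup_add split: if_splits)
    then show "AA1mon \<mu> \<and> 8 * j \<le> weight (tauL \<mu>)" using assms by (auto simp: S_def AA1_def)
  qed
  ultimately show ?thesis by blast
qed

lemma N1_Fil_eq_image:
  assumes "x \<in> N1 (2 * j + 1)"
  shows "x \<in> Fil j \<longleftrightarrow> (\<exists>z\<in>Src j. fmap j z = x)"
proof
  assume xF: "x \<in> Fil j"
  have pre: "fpre \<mu> \<in> src_basis j \<and> fmono j (fpre \<mu>) = \<mu>" if "\<mu> \<in> ks x" for \<mu>
    using fpre_props xF assms that by (auto simp: Fil_iff N1_def N1basis_def)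
  define z where "z = (\<Sum>\<mu>\<in>ks x. sg (fpre \<mu>) (1::bit))"
  have "ks z \<subseteq> (\<Union>\<mu>\<in>ks x. ks (sg (fpre \<mu>) (1::bit)))" unfolding z_def by (rule keys_sum)
  then have "z \<in> Src j" using pre by (auto simp: Src_src_basis)
  moreover have "fmap j z = (\<Sum>\<mu>\<in>ks x. sg \<mu> (lk x \<mu>))"
    unfolding z_def additive_sum[OF fmap_additive]
    by (rule sum.cong) (simp_all add: fmap_single pre in_keys_iff)
  ultimately show "\<exists>z\<in>Src j. fmap j z = x" by (metis poly_mapping_expand)
next
  assume "\<exists>z\<in>Src j. fmap j z = x"
  then obtain z where z: "z \<in> Src j" "fmap j z = x" by blast
  show "x \<in> Fil j" unfolding Fil_iff
  proof
    fix \<mu> assume "\<mu> \<in> ks x"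
    then obtain p where "p \<in> ks z" "\<mu> = fmono j p" using keys_fmap z(2) by blast
    then show "AA1mon \<mu> \<and> 8 * j \<le> weight (tauL \<mu>)" using fmono_Fil z(1) unfolding Src_src_basis by blast
  qed
qed

text \<open>The theorem, with f = fmap j and g the identity on representatives.\<close>
theorem lemma7p1:
  fixes j :: nat
  assumes "1 \<le> j"
  shows "\<exists>(f :: (mono \<times> mono) vec \<Rightarrow> mono vec) (g :: mono vec \<Rightarrow> mono vec).
    \<comment> \<open>f : Sigma^{8j} N_1(j) (x) N_1(1) -> N_1(2j+1), an injective map of A(2)_*-comodules\<close>
    (\<forall>x\<in>Src j. \<forall>y\<in>Src j. f (x + y) = f x + f y) \<and>
    (\<forall>x\<in>Src j. f x \<in> N1 (2 * j + 1)) \<and>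
    inj_on f (Src j) \<and>
    (\<forall>x\<in>Src j. \<forall>d. homog (\<lambda>mn. deg (fst mn) + deg (snd mn) + 8 * j) d x
                      \<longrightarrow> homog deg d (f x)) \<and>
    (\<forall>x\<in>Src j. psi2 (f x) = Poly_Mapping.map f (psiT x)) \<and>
    \<comment> \<open>g : N_1(2j+1) -> Q^{j-1} = (A//A(1))_* / F^j, given by representatives\<close>
    (\<forall>x\<in>N1 (2 * j + 1). \<forall>y\<in>N1 (2 * j + 1). g (x + y) = g x + g y) \<and>
    (\<forall>x\<in>N1 (2 * j + 1). g x \<in> AA1) \<and>
    (\<forall>x\<in>N1 (2 * j + 1). \<forall>d. homog deg d x
                      \<longrightarrow> (\<exists>r\<in>Fil j. homog deg d (g x - r))) \<and>
    (\<forall>x\<in>N1 (2 * j + 1). \<forall>a.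
        Poly_Mapping.lookup (psi2 (g x) - Poly_Mapping.map g (psi2 x)) a \<in> Fil j) \<and>
    \<comment> \<open>g surjective\<close>
    (\<forall>y\<in>AA1. \<exists>x\<in>N1 (2 * j + 1). g x - y \<in> Fil j) \<and>
    \<comment> \<open>exactness in the middle: ker g = im f\<close>
    (\<forall>x\<in>N1 (2 * j + 1). g x \<in> Fil j \<longleftrightarrow> (\<exists>z\<in>Src j. f z = x))"
proof (rule exI[of _ "fmap j"], rule exI[of _ "\<lambda>x. x"], intro conjI ballI allI impI)
  have zero_Fil: "0 \<in> Fil j" by (simp add: Fil_iff)
  have map_id: "Poly_Mapping.map (\<lambda>x. x) p = p" for p :: "mono \<Rightarrow>\<^sub>0 mono vec"
    by (rule poly_mapping_eqI) (simp add: lookup_map)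
  show "fmap j x \<in> N1 (2 * j + 1)" if "x \<in> Src j" for x by (rule fmap_N1[OF that])
  show "\<exists>x\<in>N1 (2 * j + 1). x - y \<in> Fil j" if "y \<in> AA1" for y by (rule N1_representative[OF that])
  fix x assume x: "x \<in> N1 (2 * j + 1)"
  then show "x \<in> AA1" by (auto simp: N1_def N1basis_def AA1_def)
  show "x \<in> Fil j \<longleftrightarrow> (\<exists>z\<in>Src j. fmap j z = x)" by (rule N1_Fil_eq_image[OF x])
  show "lk (psi2 x - Poly_Mapping.map (\<lambda>x. x) (psi2 x)) a \<in> Fil j" for a
    using zero_Fil by (simp add: map_id)
  show "\<exists>r\<in>Fil j. homog deg d (x - r)" if "homog deg d x" for d
    using zero_Fil that by (intro bexI[of _ 0]) simp_all
qed (simp_all add: fmap_add fmap_inj_on fmap_homog fmap_comodule)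

end
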